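(* Let $q\ge2$ be a prime power and let $f\in\mathbb{F}_q[x]$ with $\deg f\ge 2$. Then $$E(f)\le 1+e^\gamma\min\left\{\frac{\deg f}{q},\ \frac{\log(\deg f)}{\log q}\right\},$$ where $\gamma$ is Euler's constant.
   Context: For $f\in\mathbb{F}_q[x]$, $|f|=q^{\deg f}$. The letter $p$ denotes a monic irreducible polynomial in $\mathbb{F}_q[x]$, and $E(f)=\prod_{p\mid f}\left(1+\frac{1}{|p|}\right)$, the product over monic irreducible divisors $p$ of $f$. *)

theory Defs
  imports "HOL-Analysis.Analysis" "HOL-Computational_Algebra.Computational_Algebra"
begin

definition pnorm :: "'a::{field,finite} poly \<Rightarrow> real" where
  "pnorm f = real CARD('a) ^ degree f"

definition E_fun :: "'a::{field,finite} poly \<Rightarrow> real" where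
  "E_fun f = (\<Prod>p\<in>{p. lead_coeff p = 1 \<and> irreducible p \<and> p dvd f}. 1 + 1 / pnorm p)"

end

theory Submission
  imports Defs
begin

text \<open>
  Since \<open>1 + t \<le> exp t\<close>, \<open>E(f) \<le> exp T\<close> with \<open>T = (\<Sum>d. N d / q ^ d)\<close>, where \<open>N d\<close> counts the monic
  irreducible divisors of \<open>f\<close> of degree \<open>d\<close>. These satisfy \<open>\<Sum>d. d * N d \<le> n = deg f\<close>, and
  \<open>d * N d \<le> q ^ d\<close> because every monic irreducible of degree \<open>d\<close> divides \<open>X ^ q ^ d - X\<close>.
  Maximising \<open>T\<close> under these constraints gives \<open>T \<le> n / q\<close>, which settles \<open>n < q\<close> via
  \<open>exp x \<le> 1 + (e - 1) x\<close> on \<open>[0, 1]\<close>. If \<open>q ^ J \<le> n < q ^ (J + 1)\<close>, filling the low degrees greedily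
  gives \<open>T \<le> H\<^sub>J + s / (J + 1)\<close> with \<open>s = (n - q ^ J) / q ^ (J + 1)\<close>; convexity of \<open>exp\<close> together
  with \<open>exp H\<^sub>J \<le> 1 + e\<^sup>\<gamma> J\<close> (from \<open>H\<^sub>J \<le> \<gamma> + ln (J + 1) - 1 / (2 (J + 1))\<close>) bounds \<open>exp T\<close> by
  \<open>1 + e\<^sup>\<gamma> (J + s)\<close>, and \<open>J + s\<close> is at most both \<open>n / q\<close> and \<open>log n / log q\<close>.
\<close>

section \<open>Euler's constant and harmonic numbers\<close>

lemma exp_one_le: "exp (1::real) \<le> 274/100"
proof -
  have "(100/274::real) \<le> (1 - 1 / real 100) ^ 100" by (simp add: power_divide)
  also have "\<dots> \<le> exp (-1)"
    using exp_ge_one_minus_x_over_n_power_n[of 1 100] by simp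
  finally show ?thesis by (simp add: exp_minus field_simps)
qed

lemma exp_euler_mascheroni_ge: "(17734/10000::real) \<le> exp euler_mascheroni"
proof -
  have "(17734/10000::real) \<le> (1 + (19/33) / real 100) ^ 100" by (simp add: power_divide)
  also have "\<dots> \<le> exp (19/33)" by (rule exp_ge_one_plus_x_over_n_power_n) auto
  also have "\<dots> \<le> exp euler_mascheroni" using euler_mascheroni_gt_19_over_33 by simp
  finally show ?thesis .
qed

lemma exp_euler_mascheroni_le: "exp euler_mascheroni \<le> (182/100::real)"
proof -
  have "exp (13/22::real) ^ 22 = exp 1 ^ 13" by (simp flip: exp_of_nat_mult)
  also have "\<dots> \<le> (274/100) ^ 13" using exp_one_le by (intro power_mono) auto
  also have "\<dots> \<le> (182/100) ^ 22" by (simp add: power_divide)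
  finally have "exp (13/22::real) \<le> 182/100"
    by (subst (asm) power_mono_iff) auto
  moreover have "exp euler_mascheroni \<le> exp (13/22::real)"
    using euler_mascheroni_less_13_over_22 by simp
  ultimately show ?thesis by linarith
qed

lemma exp_two_thirds_le: "exp (2/3::real) \<le> 2"
proof -
  have "exp (2/3::real) ^ 3 = exp 1 ^ 2" by (simp flip: exp_of_nat_mult)
  also have "\<dots> \<le> (274/100) ^ 2" using exp_one_le by (intro power_mono) auto
  also have "\<dots> \<le> 2 ^ 3" by (simp add: power_divide)
  finally show ?thesis by (subst (asm) power_mono_iff) auto
qed

lemma ln_three_le: "ln (3::real) \<le> 118/100"
proof -
  have "(3::real) \<le> (1 + (118/100) / real 10) ^ 10" by (simp add: power_divide)
  also have "\<dots> \<le> exp (118/100)" by (rule exp_ge_one_plus_x_over_n_power_n) auto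
  finally show ?thesis by (metis exp_le_cancel_iff exp_ln zero_less_numeral)
qed

lemma exp_harm_le:
  assumes "1 \<le> n"
  shows "exp (harm n) \<le> 1 + exp euler_mascheroni * real n"
proof (cases "n = 1")
  \<comment> \<open>Here the margin in \<open>e \<le> 1 + e\<^sup>\<gamma>\<close> is too small for the estimate of the general case.\<close>
  case True
  then show ?thesis using exp_one_le exp_euler_mascheroni_ge by (simp add: harm_expand)
next
  case False
  define E where "E = exp (euler_mascheroni::real)"
  define M where "M = real n + 1"
  define x where "x = 1 / (2 * M)"
  have M3: "3 \<le> M" using assms False by (simp add: M_def)
  have x0: "0 < x" using M3 by (simp add: x_def)
  have "harm n - ln M + x \<le> euler_mascheroni"
    using euler_mascheroni_lower[of "n - 1"] assms
    by (simp add: M_def x_def add.commute)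
  then have "exp (harm n) \<le> exp (euler_mascheroni + ln M - x)" by simp
  also have "\<dots> = E * M / exp x" using M3 by (simp add: E_def exp_diff exp_add)
  also have "\<dots> \<le> E * M / (1 + x + x^2 / 2)"
    using exp_lower_Taylor_quadratic[of x] x0 M3
    by (intro divide_left_mono) (auto simp: E_def intro!: mult_pos_pos add_pos_nonneg)
  also have "\<dots> \<le> 1 + E * (M - 1)"
  proof -
    have "E \<le> 182/100"
      using exp_euler_mascheroni_le unfolding E_def by linarith
    moreover have "3 * M \<le> M^2" using M3 by (simp add: power2_eq_square)
    ultimately have "E * (4 * M^2 + 3 * M + 1) \<le> 8 * M^2 + 4 * M + 1"
      using mult_right_mono[of E "182/100" "4 * M^2 + 3 * M + 1"] M3 by auto
    then have "E * M * (8 * M^2) \<le> (1 + E * (M - 1)) * (8 * M^2 + 4 * M + 1)"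
      by (simp add: algebra_simps power2_eq_square power3_eq_cube)
    then have "E * M \<le> (1 + E * (M - 1)) * ((8 * M^2 + 4 * M + 1) / (8 * M^2))"
      using M3 by (simp add: field_simps)
    also have "(8 * M^2 + 4 * M + 1) / (8 * M^2) = 1 + x + x^2 / 2"
      using M3 by (simp add: x_def field_simps power2_eq_square)
    finally show ?thesis using x0 by (simp add: pos_divide_le_eq add_pos_nonneg)
  qed
  finally show ?thesis by (simp add: E_def M_def)
qed

lemma exp_harm_interpolation_le:
  assumes "1 \<le> J" "0 \<le> s" "s \<le> 1"
  shows "exp (harm J + s / (real J + 1)) \<le> 1 + exp euler_mascheroni * (real J + s)"
proof -
  have "harm J + s / (real J + 1) = (1 - s) * harm J + s * harm (Suc J)"
    by (simp add: harm_Suc field_simps)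
  then have "exp (harm J + s / (real J + 1)) \<le> (1 - s) * exp (harm J) + s * exp (harm (Suc J))"
    using convex_onD[OF exp_convex, of s "harm J" "harm (Suc J)"] assms by simp
  also have "\<dots> \<le> (1 - s) * (1 + exp euler_mascheroni * real J)
                   + s * (1 + exp euler_mascheroni * real (Suc J))"
    using assms by (intro add_mono mult_left_mono exp_harm_le) auto
  also have "\<dots> = 1 + exp euler_mascheroni * (real J + s)" by (simp add: algebra_simps)
  finally show ?thesis .
qed

section \<open>Maximising \<open>\<Sum>d. N d / q ^ d\<close>\<close>

lemma sum_count_div_power_le_linear:
  fixes N :: "nat \<Rightarrow> nat" and q n :: nat
  assumes q: "2 \<le> q" and total: "(\<Sum>d=1..n. d * N d) \<le> n"
  shows "(\<Sum>d=1..n. N d / real q ^ d) \<le> real n / real q"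
proof -
  have "N d / real q ^ d \<le> real (d * N d) / real q" if "d \<in> {1..n}" for d
  proof -
    have "real q \<le> real q ^ d" using q that by (simp add: self_le_power)
    then have "N d / real q ^ d \<le> N d / real q" using q by (intro divide_left_mono) auto
    also have "\<dots> \<le> real (d * N d) / real q"
      using that by (intro divide_right_mono) (cases d, auto)
    finally show ?thesis .
  qed
  then have "(\<Sum>d=1..n. N d / real q ^ d) \<le> (\<Sum>d=1..n. real (d * N d) / real q)"
    by (rule sum_mono)
  also have "\<dots> = (\<Sum>d=1..n. real (d * N d)) / real q" by (simp add: sum_divide_distrib)
  also have "\<dots> \<le> real n / real q"
    using total by (intro divide_right_mono)
      (simp_all only: of_nat_sum[symmetric] of_nat_le_iff of_nat_0_le_iff)
  finally show ?thesis .
qed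

lemma sum_count_div_power_le_harm:
  fixes N :: "nat \<Rightarrow> nat" and q n J :: nat
  assumes q: "2 \<le> q" and count: "\<And>d. 1 \<le> d \<Longrightarrow> d * N d \<le> q ^ d"
    and total: "(\<Sum>d=1..n. d * N d) \<le> n" and J: "1 \<le> J" "q ^ J \<le> n"
  shows "(\<Sum>d=1..n. N d / real q ^ d)
           \<le> harm J + (real n - real q ^ J) / (real q ^ (J + 1) * (real J + 1))"
proof -
  \<comment> \<open>LP duality: the weights \<open>w d\<close> decrease, so the greedy choice \<open>d * N d = q ^ d\<close> for
      \<open>d \<le> J\<close> is optimal, and \<open>l = w (J + 1)\<close> is the matching dual multiplier.\<close>
  define w where "w d = 1 / (real d * real q ^ d)" for d
  define l where "l = w (J + 1)"
  have w_antimono: "w d' \<le> w d" if "1 \<le> d" "d \<le> d'" for d d'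
    using q that by (auto simp: w_def intro!: divide_left_mono mult_mono power_increasing)
  have l_nonneg: "0 \<le> l" by (simp add: l_def w_def)
  have pointwise: "N d / real q ^ d - l * real (d * N d)
                     \<le> (if d \<le> J then 1 / real d - l * real q ^ d else 0)" if d: "1 \<le> d" for d
  proof -
    have w_eq: "N d / real q ^ d = real (d * N d) * w d" "real q ^ d * w d = 1 / real d"
      using d q by (simp_all add: w_def field_simps)
    show ?thesis
    proof (cases "d \<le> J")
      case True
      then have "l \<le> w d" unfolding l_def using d by (intro w_antimono) auto
      moreover have "real (d * N d) \<le> real q ^ d"
        using count[OF d] by (metis of_nat_le_iff of_nat_power)
      ultimately have "real (d * N d) * (w d - l) \<le> real q ^ d * (w d - l)"
        by (intro mult_right_mono) auto
      then show ?thesis using True w_eq by (simp add: algebra_simps)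
    next
      case False
      then have "w d \<le> l" unfolding l_def using d by (intro w_antimono) auto
      then have "real (d * N d) * w d \<le> l * real (d * N d)"
        by (simp add: mult.commute mult_right_mono)
      then show ?thesis using False w_eq by simp
    qed
  qed
  have "J \<le> n"
    using J less_exp[of J] power_mono[of 2 q J] q by linarith
  then have J_interval: "{d \<in> {1..n}. d \<le> J} = {1..J}" by auto
  have "(\<Sum>d=1..n. N d / real q ^ d) - l * (\<Sum>d=1..n. real (d * N d))
          = (\<Sum>d=1..n. N d / real q ^ d - l * real (d * N d))"
    by (simp add: sum_subtractf sum_distrib_left)
  also have "\<dots> \<le> (\<Sum>d=1..n. if d \<le> J then 1 / real d - l * real q ^ d else 0)"
    by (rule sum_mono) (use pointwise in auto)
  also have "\<dots> = (\<Sum>d=1..J. 1 / real d - l * real q ^ d)"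
    by (simp only: sum.inter_filter[symmetric] finite_atLeastAtMost J_interval)
  also have "\<dots> = harm J - l * (\<Sum>d=1..J. real q ^ d)"
    by (simp add: harm_def sum_subtractf sum_distrib_left inverse_eq_divide)
  also have "\<dots> \<le> harm J - l * real q ^ J"
    using J l_nonneg by (intro diff_left_mono mult_left_mono member_le_sum) auto
  finally have "(\<Sum>d=1..n. N d / real q ^ d) \<le> harm J + l * (real n - real q ^ J)"
    using total l_nonneg mult_left_mono[of "\<Sum>d=1..n. real (d * N d)" "real n" l]
    by (simp only: of_nat_sum[symmetric] of_nat_le_iff) (simp add: algebra_simps)
  then show ?thesis by (simp add: l_def w_def add.commute mult.commute)
qed

lemma base_expansion_le_divide:
  fixes q J :: nat and s :: real
  assumes q: "2 \<le> q" and J: "1 \<le> J" and s: "0 \<le> s"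
  shows "real J + s \<le> real q ^ J * (1 + s * real q) / real q"
proof -
  have "J \<le> 2 ^ (J - 1)" using J less_exp[of "J - 1"] by arith
  also have "\<dots> \<le> q ^ (J - 1)" using q by (intro power_mono) auto
  finally have "real J \<le> real q ^ (J - 1)" by (metis of_nat_le_iff of_nat_power)
  moreover have "s \<le> s * real q ^ J" using s q by (simp add: mult_le_cancel_left1)
  moreover have "real q ^ J * (1 + s * real q) / real q = real q ^ (J - 1) + s * real q ^ J"
    using J q by (simp add: field_simps power_eq_if)
  ultimately show ?thesis by linarith
qed

lemma base_expansion_le_log:
  fixes q J :: nat and s :: real
  assumes q: "2 \<le> q" and s: "0 \<le> s" "s \<le> 1"
  shows "real J + s \<le> ln (real q ^ J * (1 + s * real q)) / ln (real q)"
proof -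
  have "exp (s * ln (real q)) \<le> (1 - s) * exp 0 + s * exp (ln (real q))"
    using convex_onD[OF exp_convex, of s 0 "ln (real q)"] s by simp
  also have "\<dots> \<le> 1 + s * real q" using q s by simp
  finally have "s * ln (real q) \<le> ln (1 + s * real q)"
    using q s by (subst ln_ge_iff) (auto intro: add_pos_nonneg)
  moreover have "0 < 1 + s * real q" using q s by (simp add: add_pos_nonneg)
  then have "ln (real q ^ J * (1 + s * real q)) = real J * ln (real q) + ln (1 + s * real q)"
    using q by (simp add: ln_mult ln_realpow)
  ultimately show ?thesis using q by (simp add: field_simps)
qed

lemma exp_ratio_le_small_degree:
  fixes q n :: nat
  assumes n: "2 \<le> n" and nq: "n < q"
  shows "exp (real n / real q) \<le>
           1 + exp euler_mascheroni * min (real n / real q) (ln (real n) / ln (real q))"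
proof -
  define E where "E = exp (euler_mascheroni::real)"
  define x where "x = real n / real q"
  define L where "L = ln (real n) / ln (real q)"
  have E_bounds: "17734/10000 \<le> E" "exp 1 - 1 \<le> E"
    using exp_euler_mascheroni_ge exp_one_le unfolding E_def by linarith+
  have x: "0 \<le> x" "x \<le> 1" using nq by (auto simp: x_def)
  have "exp x \<le> (1 - x) * exp 0 + x * exp 1"
    using convex_onD[OF exp_convex, of x 0 1] x by simp
  also have "\<dots> \<le> 1 + E * x"
    using x E_bounds mult_right_mono[of "exp 1 - 1" E x] by (simp add: algebra_simps)
  finally have exp_x: "exp x \<le> 1 + E * x" .
  show ?thesis
  proof (cases "4 \<le> q")
    case True
    \<comment> \<open>\<open>ln t / t\<close> decreases for \<open>t \<ge> e\<close>, and \<open>ln 2 / 2 = ln 4 / 4\<close>.\<close>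
    have "ln (real q) / real q \<le> ln (real n) / real n"
    proof (cases "3 \<le> n")
      case True
      then show ?thesis using nq exp_le by (intro ln_x_over_x_mono) auto
    next
      case False
      then have "n = 2" using n by auto
      have "ln (real q) / real q \<le> ln 4 / 4"
        using \<open>4 \<le> q\<close> exp_le ln_x_over_x_mono[of 4 "real q"] by auto
      also have "ln (4::real) = 2 * ln 2" using ln_realpow[of 2 2] by simp
      finally show ?thesis using \<open>n = 2\<close> by simp
    qed
    then have "x \<le> L" using n nq by (simp add: x_def L_def field_simps)
    then show ?thesis
      unfolding E_def[symmetric] x_def[symmetric] L_def[symmetric] using exp_x by simp
  next
    case False
    then have "q = 3" "n = 2" using n nq by auto
    have "exp x \<le> 2" using exp_two_thirds_le by (simp add: x_def \<open>q = 3\<close> \<open>n = 2\<close>)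
    also have "2 \<le> 1 + E * L"
    proof -
      have "17734/10000 * (2/3) \<le> E * ln (2::real)"
        using ln2_ge_two_thirds E_bounds by (intro mult_mono) auto
      then have "ln (3::real) \<le> E * ln 2" using ln_three_le by linarith
      then show ?thesis by (simp add: L_def \<open>q = 3\<close> \<open>n = 2\<close> field_simps)
    qed
    finally show ?thesis
      unfolding E_def[symmetric] x_def[symmetric] L_def[symmetric] using exp_x by (simp add: min_def)
  qed
qed

lemma exp_sum_count_div_power_le:
  fixes N :: "nat \<Rightarrow> nat" and q n :: nat
  assumes q: "2 \<le> q" and n: "2 \<le> n" and count: "\<And>d. 1 \<le> d \<Longrightarrow> d * N d \<le> q ^ d"
    and total: "(\<Sum>d=1..n. d * N d) \<le> n"
  shows "exp (\<Sum>d=1..n. N d / real q ^ d)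
           \<le> 1 + exp euler_mascheroni * min (real n / real q) (ln (real n) / ln (real q))"
proof (cases "n < q")
  case True
  then show ?thesis
    using sum_count_div_power_le_linear[OF q total] exp_ratio_le_small_degree[OF n]
    by (meson exp_le_cancel_iff order_trans)
next
  case False
  obtain J where J: "q ^ J \<le> n" "n < q ^ (J + 1)" using ex_power_ivl1[OF q, of n] n by auto
  then have "1 \<le> J" using False by (cases J) auto
  have J_real: "real q ^ J \<le> real n" "real n < real q ^ (J + 1)"
    using J by (metis of_nat_le_iff of_nat_less_iff of_nat_power)+
  define s where "s = (real n - real q ^ J) / real q ^ (J + 1)"
  have "real n - real q ^ J \<le> real q ^ (J + 1)"
    using J_real(2) zero_le_power[of "real q" J, OF of_nat_0_le_iff] by linarith
  then have s: "0 \<le> s" "s \<le> 1" using J_real(1) q by (simp_all add: s_def divide_le_eq)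
  have n_eq: "real n = real q ^ J * (1 + s * real q)" using q by (simp add: s_def field_simps)
  have "exp (\<Sum>d=1..n. N d / real q ^ d) \<le> exp (harm J + s / (real J + 1))"
    using sum_count_div_power_le_harm[OF q count total \<open>1 \<le> J\<close> J(1)]
    by (simp add: s_def divide_divide_eq_left mult.commute)
  also have "\<dots> \<le> 1 + exp euler_mascheroni * (real J + s)"
    using exp_harm_interpolation_le[OF \<open>1 \<le> J\<close> s] .
  also have "\<dots> \<le> 1 + exp euler_mascheroni * min (real n / real q) (ln (real n) / ln (real q))"
    using base_expansion_le_divide[OF q \<open>1 \<le> J\<close> s(1)] base_expansion_le_log[OF q s]
    by (simp add: n_eq)
  finally show ?thesis .
qed

section \<open>Irreducible polynomials over a finite field\<close>

lemma two_le_card_field: "2 \<le> CARD('a::{field,finite})"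
proof -
  have "card {0::'a, 1} \<le> CARD('a)" by (intro card_mono) auto
  then show ?thesis by simp
qed

lemma prime_elem_dvd_prodD:
  assumes "prime_elem p" "finite A" "p dvd prod f A"
  shows "\<exists>x\<in>A. p dvd f x"
  using assms(2,3)
proof (induction A rule: finite_induct)
  case empty
  then show ?case using assms(1) by (auto simp: prime_elem_def)
next
  case (insert x F)
  then show ?case using assms(1) by (auto simp: prime_elem_dvd_mult_iff)
qed

lemma irreducible_poly_degree_pos:
  fixes p :: "'a::field poly"
  assumes "irreducible p"
  shows "0 < degree p"
  using assms is_unit_iff_degree[of p] by (auto simp: irreducible_def)

lemma
  fixes d :: nat
  assumes "1 \<le> d"
  shows finite_degree_less: "finite {r::'a::{zero,finite} poly. degree r < d}"
    and card_degree_less: "card {r::'a::{zero,finite} poly. degree r < d} = CARD('a) ^ d"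
proof -
  let ?L = "{xs::'a list. length xs = d}"
  have bij: "bij_betw Poly ?L {r::'a poly. degree r < d}"
  proof (rule bij_betwI')
    fix xs ys assume "xs \<in> ?L" "ys \<in> ?L"
    then have len: "length xs = d" "length ys = d" by auto
    show "(Poly xs = Poly ys) = (xs = ys)"
    proof
      assume "Poly xs = Poly ys"
      then have "xs ! i = ys ! i" if "i < d" for i
        using that len by (metis coeff_Poly_eq nth_default_nth)
      then show "xs = ys" using len by (simp add: nth_equalityI)
    qed simp
  next
    fix xs assume "xs \<in> ?L"
    then have "length xs = d" by simp
    then have "degree (Poly xs) \<le> d - 1"
      by (intro degree_le) (auto simp: nth_default_def)
    then show "Poly xs \<in> {r. degree r < d}" using assms by auto
  next
    fix r :: "'a poly" assume "r \<in> {r. degree r < d}"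
    then have "Poly (map (coeff r) [0..<d]) = r"
      by (intro poly_eqI) (auto simp: nth_default_def coeff_eq_0)
    then show "\<exists>xs\<in>?L. r = Poly xs" by (intro bexI[of _ "map (coeff r) [0..<d]"]) auto
  qed
  have "finite ?L" "card ?L = CARD('a) ^ d"
    using finite_lists_length_eq[of "UNIV :: 'a set" d] card_lists_length_eq[of "UNIV :: 'a set" d]
    by simp_all
  then show "finite {r::'a poly. degree r < d}" "card {r::'a poly. degree r < d} = CARD('a) ^ d"
    using bij_betw_finite[OF bij] bij_betw_same_card[OF bij] by simp_all
qed

lemma bij_betw_mult_mod_nonzero_residues:
  fixes p a :: "'a::{field,finite} poly"
  assumes p: "prime_elem p" and a: "\<not> p dvd a"
  shows "bij_betw (\<lambda>r. a * r mod p) {r. r \<noteq> 0 \<and> degree r < degree p} {r. r \<noteq> 0 \<and> degree r < degree p}"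
    (is "bij_betw ?\<phi> ?S ?S")
proof -
  have p0: "p \<noteq> 0" using p by auto
  have "0 < degree p" using p by (simp add: irreducible_poly_degree_pos prime_elem_imp_irreducible)
  then have "finite ?S" by (intro finite_subset[OF _ finite_degree_less[of "degree p"]]) auto
  moreover have "inj_on ?\<phi> ?S"
  proof (rule inj_onI)
    fix r1 r2 assume r: "r1 \<in> ?S" "r2 \<in> ?S" and "?\<phi> r1 = ?\<phi> r2"
    then have "p dvd a * (r1 - r2)" by (simp add: mod_eq_dvd_iff right_diff_distrib)
    then have "p dvd r1 - r2" using p a by (simp add: prime_elem_dvd_mult_iff)
    moreover have "degree (r1 - r2) < degree p" using r by (intro degree_diff_less) auto
    ultimately show "r1 = r2" by (metis dvd_imp_degree_le eq_iff_diff_eq_0 leD)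
  qed
  moreover have "?\<phi> ` ?S \<subseteq> ?S"
  proof
    fix r assume "r \<in> ?\<phi> ` ?S"
    then obtain r' where r': "r' \<in> ?S" "r = a * r' mod p" by auto
    have "\<not> p dvd r'" using r' by (metis (mono_tags) dvd_imp_degree_le leD mem_Collect_eq)
    then have "r \<noteq> 0" using p a r' by (simp add: mod_eq_0_iff_dvd prime_elem_dvd_mult_iff)
    moreover have "degree r < degree p" using \<open>r \<noteq> 0\<close> p0 r' by (simp add: degree_mod_less')
    ultimately show "r \<in> ?S" by simp
  qed
  ultimately show ?thesis by (simp add: bij_betw_def endo_inj_surj)
qed

lemma irreducible_poly_fermat:
  fixes p a :: "'a::{field,finite} poly"
  assumes irr: "irreducible p" and a: "\<not> p dvd a"
  shows "p dvd a ^ (CARD('a) ^ degree p - 1) - 1"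
proof -
  define S where "S = {r::'a poly. r \<noteq> 0 \<and> degree r < degree p}"
  have p: "prime_elem p" using irr by (rule field_poly_irreducible_imp_prime)
  have deg: "0 < degree p" using irr by (rule irreducible_poly_degree_pos)
  have "S = {r. degree r < degree p} - {0}" by (auto simp: S_def)
  then have finS: "finite S" and cardS: "card S = CARD('a) ^ degree p - 1"
    using deg finite_degree_less[of "degree p"] card_degree_less[of "degree p", where 'a='a]
    by (simp_all add: card_Diff_singleton)
  have bij: "bij_betw (\<lambda>r. a * r mod p) S S"
    unfolding S_def using p a by (rule bij_betw_mult_mod_nonzero_residues)
  define Q where "Q = \<Prod>S"
  have "Q mod p = (\<Prod>r\<in>S. a * r mod p) mod p"
    using prod.reindex_bij_betw[OF bij, of id] by (simp add: Q_def)
  also have "\<dots> = a ^ card S * Q mod p" by (simp add: mod_prod_eq Q_def prod.distrib)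
  finally have "p dvd Q - a ^ card S * Q" by (simp add: mod_eq_dvd_iff)
  then have "p dvd (a ^ card S - 1) * Q" by (simp add: algebra_simps dvd_diff_commute)
  moreover have "\<not> p dvd r" if "r \<in> S" for r
    using that by (metis (mono_tags) S_def dvd_imp_degree_le leD mem_Collect_eq)
  then have "\<not> p dvd Q" using prime_elem_dvd_prodD[OF p finS, of id] by (auto simp: Q_def)
  ultimately show ?thesis using p by (simp add: prime_elem_dvd_mult_iff cardS)
qed

lemma irreducible_dvd_X_power_card_minus_X:
  fixes p :: "'a::{field,finite} poly"
  assumes "irreducible p"
  shows "p dvd [:0, 1:] ^ (CARD('a) ^ degree p) - [:0, 1:]"
proof -
  have "[:0, 1:] ^ (CARD('a) ^ degree p) - [:0, 1:]
          = [:0, 1::'a:] * ([:0, 1:] ^ (CARD('a) ^ degree p - 1) - 1)"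
    by (simp add: algebra_simps flip: power_Suc)
  then show ?thesis
    using irreducible_poly_fermat[OF assms, of "[:0, 1:]"] by (metis dvd_mult dvd_mult2 dvd_refl)
qed

lemma monic_irreducible_dvd_imp_eq:
  fixes p p' :: "'a::field poly"
  assumes "lead_coeff p = 1" "irreducible p" "lead_coeff p' = 1" "irreducible p'" "p dvd p'"
  shows "p = p'"
proof -
  obtain k where k: "p' = p * k" using assms(5) by (elim dvdE)
  then have "is_unit k" using assms(2,4) by (auto simp: irreducible_def)
  then obtain c where c: "k = [:c:]" by (metis is_unit_iff_degree not_is_unit_0 degree_eq_zeroE)
  have "lead_coeff p' = lead_coeff p * lead_coeff k" using k by (simp add: lead_coeff_mult)
  then have "c = 1" using assms(1,3) c by simp
  then show ?thesis using k c by simp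
qed

lemma prod_monic_irreducible_dvd:
  fixes g :: "'a::field poly"
  assumes "finite D" "\<And>p. p \<in> D \<Longrightarrow> lead_coeff p = 1 \<and> irreducible p \<and> p dvd g"
  shows "\<Prod>D dvd g"
  using assms
proof (induction D rule: finite_induct)
  case empty
  then show ?case by simp
next
  case (insert p D)
  then have p: "lead_coeff p = 1" "irreducible p" "p dvd g" and "\<Prod>D dvd g" by auto
  then obtain k where k: "g = \<Prod>D * k" by (elim dvdE)
  have prime: "prime_elem p" using p(2) by (rule field_poly_irreducible_imp_prime)
  have "\<not> p dvd \<Prod>D"
  proof
    assume "p dvd \<Prod>D"
    then obtain p' where "p' \<in> D" "p dvd p'" using prime_elem_dvd_prodD[OF prime insert(1), of id] by auto
    then have "p = p'" using p insert(4) by (intro monic_irreducible_dvd_imp_eq) auto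
    then show False using \<open>p' \<in> D\<close> insert(2) by simp
  qed
  then have "p dvd k" using p(3) prime k by (simp add: prime_elem_dvd_mult_iff)
  then show ?case using k insert(1,2) by (auto simp: mult.assoc)
qed

lemma sum_degree_monic_irreducible_le:
  fixes g :: "'a::field poly"
  assumes "finite D" "\<And>p. p \<in> D \<Longrightarrow> lead_coeff p = 1 \<and> irreducible p \<and> p dvd g" "g \<noteq> 0"
  shows "(\<Sum>p\<in>D. degree p) \<le> degree g"
proof -
  have "0 \<notin> D" using assms(2) irreducible_poly_degree_pos by (metis degree_0 less_irrefl)
  then have "(\<Sum>p\<in>D. degree p) = degree (\<Prod>D)"
    by (intro degree_prod_eq_sum_degree[symmetric]) auto
  also have "\<dots> \<le> degree g"
    using prod_monic_irreducible_dvd[OF assms(1,2)] assms(3) by (rule dvd_imp_degree_le)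
  finally show ?thesis .
qed

lemma card_monic_irreducible_degree_le:
  "d * card {p::'a::{field,finite} poly. lead_coeff p = 1 \<and> irreducible p \<and> degree p = d}
     \<le> CARD('a) ^ d"
proof (cases "d = 0")
  case False
  define D where "D = {p::'a poly. lead_coeff p = 1 \<and> irreducible p \<and> degree p = d}"
  define g :: "'a poly" where "g = [:0, 1:] ^ CARD('a) ^ d - [:0, 1:]"
  have "2 \<le> CARD('a)" by (rule two_le_card_field)
  also have "\<dots> \<le> CARD('a) ^ d" using False by (simp add: self_le_power)
  finally have "2 \<le> CARD('a) ^ d" .
  then have "degree g = CARD('a) ^ d" by (simp add: g_def diff_conv_add_uminus degree_add_eq_left degree_power_eq)
  have "finite D"
    by (rule finite_subset[OF _ finite_degree_less[of "d + 1"]]) (auto simp: D_def)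
  moreover have "p dvd g" if "p \<in> D" for p
    using that irreducible_dvd_X_power_card_minus_X by (auto simp: D_def g_def)
  ultimately have "(\<Sum>p\<in>D. degree p) \<le> degree g"
    using \<open>2 \<le> CARD('a) ^ d\<close> \<open>degree g = _\<close>
    by (intro sum_degree_monic_irreducible_le) (auto simp: D_def)
  then show ?thesis using \<open>degree g = _\<close> by (simp add: D_def mult.commute)
qed simp

lemma sum_comp_eq_sum_card_fibres:
  fixes g :: "'b \<Rightarrow> 'c" and h :: "'c \<Rightarrow> 'd::comm_semiring_1"
  assumes "finite A" "finite S" "g ` A \<subseteq> S"
  shows "(\<Sum>x\<in>A. h (g x)) = (\<Sum>y\<in>S. of_nat (card {x\<in>A. g x = y}) * h y)"
proof -
  have "(\<Sum>x\<in>A. h (g x)) = (\<Sum>y\<in>S. \<Sum>x\<in>{x\<in>A. g x = y}. h (g x))"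
    by (rule sum.group[OF assms, symmetric])
  also have "\<dots> = (\<Sum>y\<in>S. \<Sum>x\<in>{x\<in>A. g x = y}. h y)"
    by (intro sum.cong) auto
  also have "\<dots> = (\<Sum>y\<in>S. of_nat (card {x\<in>A. g x = y}) * h y)"
    by simp
  finally show ?thesis .
qed

lemma
  fixes f :: "'a::{field,finite} poly"
  assumes "f \<noteq> 0"
  defines "P \<equiv> {p. lead_coeff p = 1 \<and> irreducible p \<and> p dvd f}"
  shows finite_monic_irreducible_divisors: "finite P"
    and degree_monic_irreducible_divisors: "degree ` P \<subseteq> {1..degree f}"
proof -
  have degree_le: "degree p \<le> degree f" if "p \<in> P" for p
    using that assms by (simp add: P_def dvd_imp_degree_le)
  then have "P \<subseteq> {r. degree r < degree f + 1}" by fastforce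
  then show "finite P" by (rule finite_subset) (simp add: finite_degree_less)
  show "degree ` P \<subseteq> {1..degree f}"
    using degree_le irreducible_poly_degree_pos by (auto simp: P_def Suc_le_eq)
qed

lemma E_fun_le_exp_sum:
  fixes f :: "'a::{field,finite} poly"
  assumes "f \<noteq> 0"
  defines "P \<equiv> {p. lead_coeff p = 1 \<and> irreducible p \<and> p dvd f}"
  shows "E_fun f \<le> exp (\<Sum>p\<in>P. (1 / real CARD('a)) ^ degree p)"
proof -
  have "E_fun f = (\<Prod>p\<in>P. 1 + (1 / real CARD('a)) ^ degree p)"
    by (simp add: E_fun_def P_def pnorm_def power_one_over)
  also have "\<dots> \<le> (\<Prod>p\<in>P. exp ((1 / real CARD('a)) ^ degree p))"
    by (intro prod_mono) (simp add: add_nonneg_nonneg exp_ge_add_one_self)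
  also have "\<dots> = exp (\<Sum>p\<in>P. (1 / real CARD('a)) ^ degree p)"
    using finite_monic_irreducible_divisors[OF assms(1)] by (simp add: exp_sum P_def)
  finally show ?thesis .
qed

theorem lemma4:
  fixes f :: "'a::{field,finite} poly"
  assumes "degree f \<ge> 2"
  shows "E_fun f \<le> 1 + exp euler_mascheroni *
           min (real (degree f) / real CARD('a)) (ln (real (degree f)) / ln (real CARD('a)))"
proof -
  define q where "q = CARD('a)"
  define n where "n = degree f"
  define P where "P = {p::'a poly. lead_coeff p = 1 \<and> irreducible p \<and> p dvd f}"
  define N where "N d = card {p\<in>P. degree p = d}" for d
  have f0: "f \<noteq> 0" using assms by auto
  note finP = finite_monic_irreducible_divisors[OF f0, folded P_def]
  note regroup = sum_comp_eq_sum_card_fibres[OF finP finite_atLeastAtMost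
      degree_monic_irreducible_divisors[OF f0, folded P_def n_def]]
  have count: "d * N d \<le> q ^ d" for d
  proof -
    let ?M = "{p::'a poly. lead_coeff p = 1 \<and> irreducible p \<and> degree p = d}"
    have "finite ?M" by (rule finite_subset[OF _ finite_degree_less[of "d + 1"]]) auto
    then have "N d \<le> card ?M" unfolding N_def P_def by (intro card_mono) auto
    then show ?thesis using card_monic_irreducible_degree_le[where d = d, where 'a = 'a]
      by (simp add: q_def) (meson le_trans mult_le_mono2)
  qed
  have total: "(\<Sum>d=1..n. d * N d) \<le> n"
    using regroup[of id] sum_degree_monic_irreducible_le[OF finP _ f0]
    by (simp add: N_def P_def n_def mult.commute)
  have "E_fun f \<le> exp (\<Sum>d=1..n. N d / real q ^ d)"
    using E_fun_le_exp_sum[OF f0] regroup[of "\<lambda>d. (1 / real q) ^ d"]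
    by (simp add: N_def P_def q_def power_one_over)
  also have "\<dots> \<le> 1 + exp euler_mascheroni * min (real n / real q) (ln (real n) / ln (real q))"
    using two_le_card_field[where 'a = 'a] assms count total
    by (intro exp_sum_count_div_power_le) (simp_all add: q_def n_def)
  finally show ?thesis by (simp add: q_def n_def)
qed

end
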